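(* Let $\mathcal{R}$ be a fusion ring with basis $\{x_1=1,\ldots,x_m\}$ and fusion matrices $M_j$. Then the primary $1$-matrix is positive semidefinite: \[ \sum_{j=1}^m\|M_j\|\,M_j\geq 0. \]
   Context: A fusion ring is a ring $\mathcal{R}$ which is a free $\mathbb{Z}$-module with a finite basis $\{x_1=1,\ldots,x_m\}$ such that $x_ix_j=\sum_k N_{ij}^k x_k$ with $N_{ij}^k\in\mathbb{N}$; there is an involution $i\mapsto i^*$ whose $\mathbb{Z}$-linear extension is an anti-involution of $\mathcal{R}$; and the coefficient of $x_1$ in $x_ix_j$ equals $\delta_{i,j^*}$. The fusion matrix of $x_j$ is $(M_j)_{k,i}=N_{ji}^k$ and $\|M_j\|$ is its operator norm on $\mathbb{C}^m$. *)

theory Defs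
  imports "HOL-Analysis.Analysis"
begin

text \<open>The basis element
  x_i is indexed by i; the unit x_1 is the index e; the involution is dual;
  N i j k is the structure constant N_{ij}^k, i.e. x_i x_j = sum_k N i j k x_k.
  Multiplication on the free Z-module is the bilinear extension, so ring axioms
  reduce to associativity and unitality on basis elements.\<close>

definition fusion_ring :: "('n::finite \<Rightarrow> 'n \<Rightarrow> 'n \<Rightarrow> nat) \<Rightarrow> 'n \<Rightarrow> ('n \<Rightarrow> 'n) \<Rightarrow> bool" where
  "fusion_ring N e dual \<longleftrightarrow>
     \<comment> \<open>associativity: (x_i x_j) x_l = x_i (x_j x_l)\<close>
     (\<forall>i j l t. (\<Sum>k\<in>UNIV. N i j k * N k l t) = (\<Sum>k\<in>UNIV. N j l k * N i k t)) \<and>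
     \<comment> \<open>x_e is the identity\<close>
     (\<forall>i k. N e i k = (if k = i then 1 else 0) \<and> N i e k = (if k = i then 1 else 0)) \<and>
     \<comment> \<open>the map i -> i* is an involution\<close>
     (\<forall>i. dual (dual i) = i) \<and>
     \<comment> \<open>its linear extension is a (unital) anti-automorphism: (x_i x_j)* = x_j* x_i*\<close>
     dual e = e \<and>
     (\<forall>i j k. N i j (dual k) = N (dual j) (dual i) k) \<and>
     \<comment> \<open>coefficient of x_1 in x_i x_j is delta_{i, j*}\<close>
     (\<forall>i j. N i j e = (if i = dual j then 1 else 0))"

definition fusion_mat :: "('n::finite \<Rightarrow> 'n \<Rightarrow> 'n \<Rightarrow> nat) \<Rightarrow> 'n \<Rightarrow> complex^'n^'n" where
  "fusion_mat N j = (\<chi> k i. of_nat (N j i k))"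

definition mat_opnorm :: "complex^'n^'n \<Rightarrow> real" where
  "mat_opnorm A = onorm (\<lambda>v::complex^'n. A *v v)"

definition psd :: "complex^'n^'n \<Rightarrow> bool" where
  "psd A \<longleftrightarrow> (\<forall>v::complex^'n.
      let q = (\<Sum>i\<in>UNIV. cnj (v $ i) * (A *v v) $ i) in Im q = 0 \<and> 0 \<le> Re q)"

end

theory Submission
  imports Defs
begin

text \<open>
  The matrix R of right multiplication by x_1 + ... + x_m has positive entries (no product
  x_i x_j vanishes) and, by associativity, commutes with every M_j. Its Perron-Frobenius
  vector d, obtained from Brouwer's fixed point theorem, is therefore a common eigenvector:
  M_j d = FPdim(x_j) d, where FPdim is a ring homomorphism with FPdim(x_j*) = FPdim(x_j).
  Frobenius reciprocity gives M_j^T = M_{j*}, so d is also a left eigenvector and the Schur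
  test yields ||M_j|| = FPdim(x_j). Hence A = sum_j FPdim(x_j) M_j is symmetric with
  A^2 = (sum_j FPdim(x_j)^2) A, a positive multiple of an orthogonal projection.
\<close>

section \<open>Perron vectors of positive matrices\<close>

definition simplex_cart :: "(real^'n::finite) set" where
  "simplex_cart = {x. (\<forall>i. 0 \<le> x $ i) \<and> (\<Sum>i\<in>UNIV. x $ i) = 1}"

lemma compact_simplex_cart: "compact simplex_cart"
  unfolding compact_eq_bounded_closed
proof
  show "bounded simplex_cart"
    unfolding bounded_iff
  proof (intro exI ballI)
    fix x :: "real^'n" assume x: "x \<in> simplex_cart"
    have "norm x \<le> (\<Sum>i\<in>UNIV. \<bar>x $ i\<bar>)" by (rule norm_le_l1_cart)
    also have "\<dots> = 1" using x by (simp add: simplex_cart_def)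
    finally show "norm x \<le> 1" .
  qed
  have "simplex_cart = {x. \<forall>i. 0 \<le> x $ i} \<inter> {x::real^'n. (\<Sum>i\<in>UNIV. x $ i) = 1}"
    by (auto simp: simplex_cart_def)
  moreover have "closed {x::real^'n. (\<Sum>i\<in>UNIV. x $ i) = 1}"
    by (intro closed_Collect_eq continuous_intros)
  ultimately show "closed simplex_cart"
    by (metis closed_Int closed_positive_orthant)
qed

lemma convex_simplex_cart: "convex simplex_cart"
  unfolding convex_def simplex_cart_def
  by (auto simp: sum.distrib simp flip: sum_distrib_left)

lemma simplex_cart_nonempty: "simplex_cart \<noteq> {}"
proof -
  have "(\<chi> i. if i = undefined then 1 else 0) \<in> simplex_cart"
    by (simp add: simplex_cart_def)
  then show ?thesis by blast
qed

lemma positive_matrix_has_positive_eigenvector: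
  fixes R :: "'n::finite \<Rightarrow> 'n \<Rightarrow> real"
  assumes R_pos: "\<And>k i. R k i > 0"
  obtains d r where "\<And>k. d k > 0" and "\<And>k. (\<Sum>i\<in>UNIV. R k i * d i) = r * d k"
proof -
  define Rx where "Rx x k = (\<Sum>i\<in>UNIV. R k i * x $ i)" for x :: "real^'n" and k
  define l1 where "l1 x = (\<Sum>k\<in>UNIV. Rx x k)" for x
  have Rx_pos: "Rx x k > 0" if "x \<in> simplex_cart" for x k
  proof -
    from that have nonneg: "\<And>i. 0 \<le> x $ i" and "(\<Sum>i\<in>UNIV. x $ i) = 1"
      by (auto simp: simplex_cart_def)
    then obtain i where "x $ i \<noteq> 0" by (metis sum.neutral zero_neq_one)
    with nonneg have "0 < R k i * x $ i" using R_pos by (simp add: order_less_le)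
    also have "\<dots> \<le> Rx x k"
      unfolding Rx_def using nonneg R_pos by (intro member_le_sum) (auto simp: less_imp_le)
    finally show ?thesis .
  qed
  then have l1_pos: "l1 x > 0" if "x \<in> simplex_cart" for x
    unfolding l1_def using that by (simp add: sum_pos)
  have continuous: "continuous_on simplex_cart (\<lambda>x. \<chi> k. Rx x k / l1 x)"
    unfolding Rx_def l1_def
    by (intro continuous_intros) (use l1_pos in \<open>fastforce simp: l1_def Rx_def\<close>)
  have maps_to: "(\<lambda>x. \<chi> k. Rx x k / l1 x) \<in> simplex_cart \<rightarrow> simplex_cart"
  proof
    fix x :: "real^'n" assume x: "x \<in> simplex_cart"
    have "(\<Sum>k\<in>UNIV. Rx x k / l1 x) = 1"
      using l1_pos[OF x] by (simp add: l1_def flip: sum_divide_distrib)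
    then show "(\<chi> k. Rx x k / l1 x) \<in> simplex_cart"
      using Rx_pos[OF x] l1_pos[OF x] by (auto simp: simplex_cart_def less_imp_le)
  qed
  \<comment> \<open>a fixed point of the normalised map x \<mapsto> Rx / |Rx|_1 on the simplex is a Perron vector\<close>
  obtain x where x: "x \<in> simplex_cart" and "(\<chi> k. Rx x k / l1 x) = x"
    by (rule brouwer[OF compact_simplex_cart convex_simplex_cart simplex_cart_nonempty
          continuous maps_to])
  then have fixed: "\<And>k. Rx x k / l1 x = x $ k"
    by (metis vec_lambda_beta)
  show ?thesis
  proof
    show "x $ k > 0" for k
      using fixed[of k] Rx_pos[OF x] l1_pos[OF x] by (metis divide_pos_pos)
    show "(\<Sum>i\<in>UNIV. R k i * x $ i) = l1 x * x $ k" for k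
      using fixed[of k] l1_pos[OF x] by (simp add: Rx_def field_simps)
  qed
qed

lemma positive_matrix_eigenvector_proportional:
  fixes R :: "'n::finite \<Rightarrow> 'n \<Rightarrow> real"
  assumes R_pos: "\<And>k i. R k i > 0" and d_pos: "\<And>k. d k > 0"
    and Rd: "\<And>k. (\<Sum>i\<in>UNIV. R k i * d i) = r * d k"
    and Rw: "\<And>k. (\<Sum>i\<in>UNIV. R k i * w i) = r * w k"
  obtains t where "\<And>k. w k = t * d k"
proof -
  \<comment> \<open>subtract the largest multiple of d that stays below w: the nonnegative remainder
    vanishes at some k0, and R k0 i > 0 then forces it to vanish everywhere\<close>
  define t where "t = Min (range (\<lambda>k. w k / d k))"
  have "t \<in> range (\<lambda>k. w k / d k)"
    unfolding t_def by (rule Min_in) auto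
  then obtain k0 where k0: "t = w k0 / d k0" by auto
  have t_le: "t \<le> w k / d k" for k
    unfolding t_def by (rule Min_le) auto
  define u where "u k = w k - t * d k" for k
  have u_nonneg: "u k \<ge> 0" for k
    using t_le[of k] d_pos[of k] by (simp add: u_def pos_le_divide_eq)
  have "(\<Sum>i\<in>UNIV. R k0 i * u i) = r * u k0"
    using Rw[of k0] Rd[of k0]
    by (simp add: u_def right_diff_distrib sum_subtractf mult.left_commute[of _ t]
        flip: sum_distrib_left)
  also have "u k0 = 0"
    using k0 d_pos[of k0] by (simp add: u_def)
  finally have "(\<Sum>i\<in>UNIV. R k0 i * u i) = 0"
    by simp
  then have "R k0 k * u k = 0" for k
    using sum_nonneg_eq_0_iff[of UNIV "\<lambda>i. R k0 i * u i"] R_pos u_nonneg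
    by (simp add: less_imp_le)
  then have "u k = 0" for k
    using R_pos[of k0 k] by (metis less_irrefl mult_eq_0_iff)
  then show ?thesis
    by (intro that[of t]) (simp add: u_def)
qed

section \<open>Operator norm and positive semidefiniteness\<close>

lemma weighted_Cauchy_Schwarz_sum:
  fixes w x :: "'a \<Rightarrow> real"
  assumes "\<And>i. i \<in> I \<Longrightarrow> w i \<ge> 0"
  shows "(\<Sum>i\<in>I. w i * x i)\<^sup>2 \<le> (\<Sum>i\<in>I. w i) * (\<Sum>i\<in>I. w i * (x i)\<^sup>2)"
proof -
  have "(\<Sum>i\<in>I. sqrt (w i) * (sqrt (w i) * x i))\<^sup>2
      \<le> (\<Sum>i\<in>I. (sqrt (w i))\<^sup>2) * (\<Sum>i\<in>I. (sqrt (w i) * x i)\<^sup>2)"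
    by (rule Cauchy_Schwarz_ineq_sum)
  moreover have "(\<Sum>i\<in>I. sqrt (w i) * (sqrt (w i) * x i)) = (\<Sum>i\<in>I. w i * x i)"
    using assms by (intro sum.cong) (auto simp flip: mult.assoc)
  moreover have "(\<Sum>i\<in>I. (sqrt (w i))\<^sup>2) = (\<Sum>i\<in>I. w i)"
    using assms by (intro sum.cong) auto
  moreover have "(\<Sum>i\<in>I. (sqrt (w i) * x i)\<^sup>2) = (\<Sum>i\<in>I. w i * (x i)\<^sup>2)"
    using assms by (intro sum.cong) (auto simp: power_mult_distrib)
  ultimately show ?thesis by simp
qed

lemma power2_norm_vec_eq_sum:
  "(norm (v :: 'a::real_normed_vector^'n))\<^sup>2 = (\<Sum>i\<in>UNIV. (norm (v $ i))\<^sup>2)"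
  by (simp add: norm_vec_def L2_set_def sum_nonneg)

lemma mat_opnorm_le_Schur_test:
  fixes M :: "complex^'n^'n" and L :: "'n \<Rightarrow> 'n \<Rightarrow> real"
  assumes M_le: "\<And>k i. cmod (M $ k $ i) \<le> L k i" and p_pos: "\<And>i. p i > 0"
    and row: "\<And>k. (\<Sum>i\<in>UNIV. L k i * p i) \<le> c * p k"
    and col: "\<And>i. (\<Sum>k\<in>UNIV. L k i * p k) \<le> c * p i"
  shows "mat_opnorm M \<le> c"
  unfolding mat_opnorm_def
proof (rule onorm_le)
  fix v :: "complex^'n"
  have L_nonneg: "L k i \<ge> 0" for k i
    by (rule order_trans[OF norm_ge_zero M_le])
  have "0 \<le> (\<Sum>i\<in>UNIV. L undefined i * p i)"
    using L_nonneg p_pos by (simp add: sum_nonneg less_imp_le)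
  also note row[of undefined]
  finally have c_nonneg: "c \<ge> 0"
    using p_pos[of undefined] by (simp add: zero_le_mult_iff)
  define a where "a i = (cmod (v $ i))\<^sup>2 / p i" for i
  have a_nonneg: "a i \<ge> 0" for i
    using p_pos[of i] by (simp add: a_def)
  have row_bound: "(cmod ((M *v v) $ k))\<^sup>2 \<le> c * p k * (\<Sum>i\<in>UNIV. L k i * a i)" for k
  proof -
    have "cmod ((M *v v) $ k) \<le> (\<Sum>i\<in>UNIV. cmod (M $ k $ i * v $ i))"
      unfolding matrix_vector_mult_def vec_lambda_beta by (rule norm_sum)
    also have "\<dots> \<le> (\<Sum>i\<in>UNIV. (L k i * p i) * (cmod (v $ i) / p i))"
      using M_le p_pos by (intro sum_mono) (simp add: norm_mult mult_right_mono less_imp_neq[symmetric])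
    finally have "(cmod ((M *v v) $ k))\<^sup>2 \<le> (\<Sum>i\<in>UNIV. (L k i * p i) * (cmod (v $ i) / p i))\<^sup>2"
      by (simp add: power_mono)
    also have "\<dots> \<le> (\<Sum>i\<in>UNIV. L k i * p i) * (\<Sum>i\<in>UNIV. (L k i * p i) * (cmod (v $ i) / p i)\<^sup>2)"
      using L_nonneg p_pos by (intro weighted_Cauchy_Schwarz_sum) (simp add: less_imp_le)
    also have "(\<Sum>i\<in>UNIV. (L k i * p i) * (cmod (v $ i) / p i)\<^sup>2) = (\<Sum>i\<in>UNIV. L k i * a i)"
      using p_pos by (intro sum.cong) (auto simp: a_def power2_eq_square less_imp_neq[symmetric])
    also have "(\<Sum>i\<in>UNIV. L k i * p i) * \<dots> \<le> c * p k * (\<Sum>i\<in>UNIV. L k i * a i)"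
      using row L_nonneg a_nonneg by (intro mult_right_mono sum_nonneg) auto
    finally show ?thesis .
  qed
  have "(norm (M *v v))\<^sup>2 \<le> (\<Sum>k\<in>UNIV. c * p k * (\<Sum>i\<in>UNIV. L k i * a i))"
    unfolding power2_norm_vec_eq_sum by (intro sum_mono row_bound)
  also have "\<dots> = c * (\<Sum>i\<in>UNIV. a i * (\<Sum>k\<in>UNIV. L k i * p k))"
    unfolding sum_distrib_left sum_distrib_right
    by (subst sum.swap) (simp add: mult_ac)
  also have "\<dots> \<le> c * (\<Sum>i\<in>UNIV. a i * (c * p i))"
    using col a_nonneg c_nonneg by (intro mult_left_mono sum_mono) auto
  also have "\<dots> = c\<^sup>2 * (\<Sum>i\<in>UNIV. (cmod (v $ i))\<^sup>2)"
    using p_pos by (simp add: a_def sum_distrib_left power2_eq_square less_imp_neq[symmetric] mult_ac)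
  also have "\<dots> = (c * norm v)\<^sup>2"
    by (simp add: power_mult_distrib power2_norm_vec_eq_sum)
  finally have "(norm (M *v v))\<^sup>2 \<le> (c * norm v)\<^sup>2" .
  then show "norm (M *v v) \<le> c * norm v"
    by (rule power2_le_imp_le) (simp add: c_nonneg)
qed

lemma norm_vector_scalar_mult: "norm (a *s v) = cmod a * norm (v :: complex^'n)"
  by (simp add: norm_vec_def L2_set_def norm_mult power_mult_distrib real_sqrt_mult
      flip: sum_distrib_left)

lemma cmod_eigenvalue_le_mat_opnorm:
  fixes M :: "complex^'n^'n"
  assumes "M *v v = a *s v" and "v \<noteq> 0"
  shows "cmod a \<le> mat_opnorm M"
proof -
  have "cmod a * norm v = norm (M *v v)"
    using assms(1) by (simp add: norm_vector_scalar_mult)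
  also have "\<dots> \<le> mat_opnorm M * norm v"
    unfolding mat_opnorm_def by (rule onorm) simp
  finally show ?thesis
    using assms(2) by simp
qed

lemma psd_if_hermitian_square_eq_scaleR:
  fixes A :: "complex^'n^'n"
  assumes hermitian: "\<And>i k. cnj (A $ k $ i) = A $ i $ k"
    and square: "A ** A = D *\<^sub>R A" and D_pos: "D > 0"
  shows "psd A"
  unfolding psd_def Let_def
proof
  fix v :: "complex^'n"
  define w where "w = A *v v"
  define q where "q = (\<Sum>i\<in>UNIV. cnj (v $ i) * w $ i)"
  \<comment> \<open>|Av|^2 = v* A* A v = v* A^2 v = D v* A v\<close>
  have "complex_of_real (\<Sum>i\<in>UNIV. (cmod (w $ i))\<^sup>2) = (\<Sum>i\<in>UNIV. cnj (w $ i) * w $ i)"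
    unfolding of_real_sum complex_norm_square by (simp add: mult.commute)
  also have "\<dots> = (\<Sum>i\<in>UNIV. \<Sum>k\<in>UNIV. cnj (v $ k) * A $ k $ i * w $ i)"
  proof -
    have "cnj (w $ i) = (\<Sum>k\<in>UNIV. cnj (v $ k) * A $ k $ i)" for i
      by (simp add: w_def matrix_vector_mult_def cnj_sum hermitian mult.commute)
    then show ?thesis
      by (simp add: sum_distrib_right)
  qed
  also have "\<dots> = (\<Sum>k\<in>UNIV. cnj (v $ k) * (A *v w) $ k)"
    by (subst sum.swap) (simp add: matrix_vector_mult_def sum_distrib_left mult_ac)
  also have "A *v w = (D *\<^sub>R A) *v v"
    by (simp add: w_def matrix_vector_mul_assoc square)
  also have "(\<Sum>k\<in>UNIV. cnj (v $ k) * ((D *\<^sub>R A) *v v) $ k) = complex_of_real D * q"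
    by (simp add: q_def w_def matrix_vector_mult_def vector_scaleR_component
        scaleR_conv_of_real[where 'a=complex] sum_distrib_left mult_ac)
  finally have "q = complex_of_real ((\<Sum>i\<in>UNIV. (cmod (w $ i))\<^sup>2) / D)"
    using D_pos by (simp add: field_simps)
  moreover have "(\<Sum>i\<in>UNIV. (cmod (w $ i))\<^sup>2) / D \<ge> 0"
    using D_pos by (simp add: sum_nonneg)
  ultimately show "Im q = 0 \<and> 0 \<le> Re q"
    by simp
qed

section \<open>Frobenius-Perron dimensions of a fusion ring\<close>

locale fusion_rules =
  fixes N :: "'n::finite \<Rightarrow> 'n \<Rightarrow> 'n \<Rightarrow> nat" and e :: 'n and dual :: "'n \<Rightarrow> 'n"
  assumes fusion_ring: "fusion_ring N e dual"
begin

lemma N_assoc: "(\<Sum>k\<in>UNIV. N i j k * N k l t) = (\<Sum>k\<in>UNIV. N j l k * N i k t)"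
  using fusion_ring unfolding fusion_ring_def by blast

lemma N_unit_left: "N e i k = (if k = i then 1 else 0)"
  using fusion_ring unfolding fusion_ring_def by blast

lemma N_unit_right: "N i e k = (if k = i then 1 else 0)"
  using fusion_ring unfolding fusion_ring_def by blast

lemma dual_dual [simp]: "dual (dual i) = i"
  using fusion_ring unfolding fusion_ring_def by blast

lemma N_dual: "N i j (dual k) = N (dual j) (dual i) k"
  using fusion_ring unfolding fusion_ring_def by blast

lemma N_unit_coeff: "N i j e = (if i = dual j then 1 else 0)"
  using fusion_ring unfolding fusion_ring_def by blast

lemma eq_dual_iff: "i = dual k \<longleftrightarrow> k = dual i"
  by auto

lemma N_rotate: "N i j (dual l) = N j l (dual i)"
proof -
  \<comment> \<open>compare the coefficients of x_e in (x_i x_j) x_l and x_i (x_j x_l)\<close>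
  have "(\<Sum>k\<in>UNIV. N i j k * N k l e) = (\<Sum>k\<in>UNIV. N j l k * N i k e)"
    by (rule N_assoc)
  then show ?thesis
    by (simp add: N_unit_coeff eq_dual_iff if_distrib[of "(*) _"] cong: if_cong)
qed

lemma N_reciprocity: "N i l k = N (dual i) k l"
proof -
  have "N i l k = N l (dual k) (dual i)"
    using N_rotate[of i l "dual k"] by simp
  also have "\<dots> = N k (dual l) i"
    by (simp add: N_dual)
  also have "\<dots> = N (dual i) k l"
    using N_rotate[of "dual i" k "dual l"] by simp
  finally show ?thesis .
qed

lemma N_exists_pos: "\<exists>k. N i j k > 0"
proof -
  \<comment> \<open>x_i occurs in (x_i x_j) x_{j*} = x_i (x_j x_{j*}), since x_e occurs in x_j x_{j*}\<close>
  have "N j (dual j) e * N i e i \<le> (\<Sum>k\<in>UNIV. N j (dual j) k * N i k i)"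
    by (rule member_le_sum) auto
  also have "\<dots> = (\<Sum>k\<in>UNIV. N i j k * N k (dual j) i)"
    by (rule N_assoc[symmetric])
  finally have "1 \<le> (\<Sum>k\<in>UNIV. N i j k * N k (dual j) i)"
    by (simp add: N_unit_coeff N_unit_right)
  then have "(\<Sum>k\<in>UNIV. N i j k * N k (dual j) i) \<noteq> 0"
    by linarith
  then obtain k where "N i j k * N k (dual j) i \<noteq> 0"
    by (meson sum.neutral)
  then show ?thesis
    by auto
qed

definition total_mult :: "'n \<Rightarrow> 'n \<Rightarrow> real" where
  "total_mult k i = real (\<Sum>s\<in>UNIV. N i s k)"

lemma total_mult_pos: "total_mult k i > 0"
proof -
  obtain j where "N (dual i) k j > 0"
    using N_exists_pos by blast
  then have "0 < N i j k"
    by (simp add: N_reciprocity[of i j k])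
  also have "N i j k \<le> (\<Sum>s\<in>UNIV. N i s k)"
    by (rule member_le_sum) auto
  finally show ?thesis
    unfolding total_mult_def of_nat_0_less_iff .
qed

lemma total_mult_commute:
  "(\<Sum>i\<in>UNIV. total_mult k i * N j l i) = (\<Sum>m\<in>UNIV. N j m k * total_mult m l)"
proof -
  have "(\<Sum>i\<in>UNIV. (\<Sum>s\<in>UNIV. N i s k) * N j l i) = (\<Sum>i\<in>UNIV. \<Sum>s\<in>UNIV. N j l i * N i s k)"
    by (intro sum.cong refl) (simp add: sum_distrib_left mult.commute)
  also have "\<dots> = (\<Sum>s\<in>UNIV. \<Sum>i\<in>UNIV. N j l i * N i s k)"
    by (rule sum.swap)
  also have "\<dots> = (\<Sum>s\<in>UNIV. \<Sum>m\<in>UNIV. N l s m * N j m k)"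
    by (simp add: N_assoc)
  also have "\<dots> = (\<Sum>m\<in>UNIV. \<Sum>s\<in>UNIV. N l s m * N j m k)"
    by (rule sum.swap)
  also have "\<dots> = (\<Sum>m\<in>UNIV. N j m k * (\<Sum>s\<in>UNIV. N l s m))"
    by (intro sum.cong refl) (simp add: sum_distrib_left mult.commute)
  finally show ?thesis
    unfolding total_mult_def by (simp flip: of_nat_mult of_nat_sum)
qed

definition perron_vec :: "'n \<Rightarrow> real" where
  "perron_vec = (SOME d. (\<forall>k. d k > 0) \<and>
     (\<exists>r. \<forall>k. (\<Sum>i\<in>UNIV. total_mult k i * d i) = r * d k))"

lemma perron_vec:
  "(\<forall>k. perron_vec k > 0) \<and>
   (\<exists>r. \<forall>k. (\<Sum>i\<in>UNIV. total_mult k i * perron_vec i) = r * perron_vec k)"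
proof -
  obtain d r where "\<And>k. d k > 0" and "\<And>k. (\<Sum>i\<in>UNIV. total_mult k i * d i) = r * d k"
    using positive_matrix_has_positive_eigenvector[where R = total_mult, OF total_mult_pos] by blast
  then have "\<exists>d. (\<forall>k. d k > 0) \<and> (\<exists>r. \<forall>k. (\<Sum>i\<in>UNIV. total_mult k i * d i) = r * d k)"
    by blast
  then show ?thesis
    unfolding perron_vec_def by (rule someI_ex)
qed

lemma perron_vec_pos: "perron_vec k > 0"
  using perron_vec by blast

definition fpdim :: "'n \<Rightarrow> real" where
  "fpdim j = (SOME t. \<forall>k. (\<Sum>l\<in>UNIV. N j l k * perron_vec l) = t * perron_vec k)"

lemma fusion_mat_perron_vec: "(\<Sum>l\<in>UNIV. N j l k * perron_vec l) = fpdim j * perron_vec k"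
proof -
  obtain r where r: "\<And>k. (\<Sum>i\<in>UNIV. total_mult k i * perron_vec i) = r * perron_vec k"
    using perron_vec by blast
  define w where "w k = (\<Sum>l\<in>UNIV. N j l k * perron_vec l)" for k
  \<comment> \<open>M_j commutes with total_mult, so M_j d is again an eigenvector for the Perron root\<close>
  have "(\<Sum>i\<in>UNIV. total_mult k i * w i) = r * w k" for k
  proof -
    have "(\<Sum>i\<in>UNIV. total_mult k i * w i)
        = (\<Sum>l\<in>UNIV. perron_vec l * (\<Sum>i\<in>UNIV. total_mult k i * N j l i))"
      unfolding w_def sum_distrib_left by (subst sum.swap) (simp add: mult_ac)
    also have "\<dots> = (\<Sum>m\<in>UNIV. N j m k * (\<Sum>l\<in>UNIV. total_mult m l * perron_vec l))"
      unfolding total_mult_commute sum_distrib_left by (subst sum.swap) (simp add: mult_ac)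
    also have "\<dots> = r * w k"
      unfolding w_def r sum_distrib_left by (simp add: mult_ac)
    finally show ?thesis .
  qed
  then obtain t where "\<And>k. w k = t * perron_vec k"
    using positive_matrix_eigenvector_proportional[where R = total_mult,
        OF total_mult_pos perron_vec_pos r] by blast
  then have "\<exists>t. \<forall>k. (\<Sum>l\<in>UNIV. N j l k * perron_vec l) = t * perron_vec k"
    unfolding w_def by blast
  then have "\<forall>k. (\<Sum>l\<in>UNIV. N j l k * perron_vec l) = fpdim j * perron_vec k"
    unfolding fpdim_def by (rule someI_ex)
  then show ?thesis ..
qed

lemma fpdim_unit: "fpdim e = 1"
proof -
  have "(\<Sum>l\<in>UNIV. N e l e * perron_vec l) = (\<Sum>l\<in>UNIV. if l = e then perron_vec e else 0)"
    by (intro sum.cong refl) (simp add: N_unit_left)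
  then have "fpdim e * perron_vec e = perron_vec e"
    by (simp add: fusion_mat_perron_vec)
  then show ?thesis
    using perron_vec_pos[of e] by simp
qed

lemma sum_reindex_dual: "(\<Sum>j\<in>UNIV. f (dual j)) = (\<Sum>j\<in>UNIV. f j)"
  by (rule sum.reindex_bij_witness[of _ dual dual]) auto

lemma fpdim_dual: "fpdim (dual j) = fpdim j"
proof -
  \<comment> \<open>evaluate the bilinear form d^T M_j d in two ways, using M_j^T = M_{j*}\<close>
  have "(\<Sum>k\<in>UNIV. perron_vec k * (\<Sum>l\<in>UNIV. N j l k * perron_vec l))
      = fpdim j * (\<Sum>k\<in>UNIV. perron_vec k * perron_vec k)"
    by (simp only: fusion_mat_perron_vec) (simp add: sum_distrib_left mult_ac)
  moreover have "(\<Sum>l\<in>UNIV. perron_vec l * (\<Sum>k\<in>UNIV. N (dual j) k l * perron_vec k))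
      = fpdim (dual j) * (\<Sum>k\<in>UNIV. perron_vec k * perron_vec k)"
    by (simp only: fusion_mat_perron_vec) (simp add: sum_distrib_left mult_ac)
  moreover have "(\<Sum>k\<in>UNIV. perron_vec k * (\<Sum>l\<in>UNIV. N j l k * perron_vec l))
      = (\<Sum>l\<in>UNIV. perron_vec l * (\<Sum>k\<in>UNIV. N (dual j) k l * perron_vec k))"
    unfolding sum_distrib_left
    by (subst sum.swap) (simp add: N_reciprocity[of j] mult_ac)
  ultimately have "fpdim j * (\<Sum>k\<in>UNIV. perron_vec k * perron_vec k)
      = fpdim (dual j) * (\<Sum>k\<in>UNIV. perron_vec k * perron_vec k)"
    by linarith
  moreover have "(\<Sum>k\<in>UNIV. perron_vec k * perron_vec k) \<noteq> 0"
    using perron_vec_pos by (simp add: sum_pos less_imp_neq[symmetric])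
  ultimately show ?thesis
    by simp
qed

lemma perron_vec_fusion_mat: "(\<Sum>k\<in>UNIV. N j i k * perron_vec k) = fpdim j * perron_vec i"
  using fusion_mat_perron_vec[of "dual j" i] by (simp add: N_reciprocity[of j] fpdim_dual)

lemma fpdim_mult: "(\<Sum>k\<in>UNIV. N i l k * fpdim k) = fpdim i * fpdim l"
proof -
  \<comment> \<open>apply both sides of (x_i x_l) x_s = x_i (x_l x_s) to the Perron vector\<close>
  have "(\<Sum>k\<in>UNIV. N i l k * fpdim k) * perron_vec e
      = (\<Sum>k\<in>UNIV. N i l k * (\<Sum>s\<in>UNIV. N k s e * perron_vec s))"
    by (simp only: fusion_mat_perron_vec) (simp add: sum_distrib_left sum_distrib_right mult_ac)
  also have "\<dots> = (\<Sum>s\<in>UNIV. perron_vec s * (\<Sum>k\<in>UNIV. real (N i l k * N k s e)))"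
    unfolding sum_distrib_left by (subst sum.swap) (simp add: mult_ac)
  also have "\<dots> = (\<Sum>s\<in>UNIV. perron_vec s * (\<Sum>m\<in>UNIV. real (N l s m * N i m e)))"
    unfolding of_nat_sum[symmetric] N_assoc ..
  also have "\<dots> = (\<Sum>m\<in>UNIV. N i m e * (\<Sum>s\<in>UNIV. N l s m * perron_vec s))"
    unfolding sum_distrib_left by (subst sum.swap) (simp add: mult_ac)
  also have "\<dots> = (\<Sum>m\<in>UNIV. fpdim l * (N i m e * perron_vec m))"
    by (simp only: fusion_mat_perron_vec) (simp add: mult_ac)
  also have "\<dots> = fpdim i * fpdim l * perron_vec e"
    by (simp only: fusion_mat_perron_vec flip: sum_distrib_left) (simp add: mult_ac)
  finally show ?thesis
    using perron_vec_pos[of e] by simp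
qed

lemma fusion_mat_fpdim: "(\<Sum>l\<in>UNIV. N j l m * fpdim l) = fpdim j * fpdim m"
  using fpdim_mult[of "dual j" m] by (simp add: N_reciprocity[of j] fpdim_dual)

lemma mat_opnorm_fusion_mat: "mat_opnorm (fusion_mat N j) = fpdim j"
proof (rule antisym)
  show "mat_opnorm (fusion_mat N j) \<le> fpdim j"
    by (rule mat_opnorm_le_Schur_test[where L = "\<lambda>k i. N j i k" and p = perron_vec])
      (simp_all add: fusion_mat_def perron_vec_pos fusion_mat_perron_vec perron_vec_fusion_mat)
  define q :: "complex^'n" where "q = (\<chi> i. of_real (perron_vec i))"
  have "(fusion_mat N j *v q) $ k = of_real (\<Sum>l\<in>UNIV. N j l k * perron_vec l)" for k
    by (simp add: matrix_vector_mult_def fusion_mat_def q_def)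
  then have "fusion_mat N j *v q = of_real (fpdim j) *s q"
    by (simp add: vec_eq_iff fusion_mat_perron_vec q_def)
  moreover have "q $ e \<noteq> 0"
    using perron_vec_pos[of e] by (simp add: q_def)
  then have "q \<noteq> 0"
    by auto
  ultimately have "cmod (of_real (fpdim j)) \<le> mat_opnorm (fusion_mat N j)"
    by (rule cmod_eigenvalue_le_mat_opnorm)
  then show "fpdim j \<le> mat_opnorm (fusion_mat N j)"
    by simp
qed

definition primary_mat :: "complex^'n^'n" where
  "primary_mat = (\<Sum>j\<in>UNIV. mat_opnorm (fusion_mat N j) *\<^sub>R fusion_mat N j)"

lemma primary_mat_entry: "primary_mat $ k $ i = of_real (\<Sum>j\<in>UNIV. fpdim j * N j i k)"
  unfolding primary_mat_def sum_component vector_scaleR_component mat_opnorm_fusion_mat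
  by (simp add: fusion_mat_def scaleR_conv_of_real)

lemma primary_mat_hermitian: "cnj (primary_mat $ k $ i) = primary_mat $ i $ k"
proof -
  have "(\<Sum>j\<in>UNIV. fpdim j * N j i k) = (\<Sum>j\<in>UNIV. fpdim (dual j) * N (dual j) k i)"
    by (simp add: N_reciprocity[of _ i k] fpdim_dual)
  also have "\<dots> = (\<Sum>j\<in>UNIV. fpdim j * N j k i)"
    by (rule sum_reindex_dual)
  finally show ?thesis
    by (simp add: primary_mat_entry)
qed

lemma primary_mat_square:
  "primary_mat ** primary_mat = (\<Sum>j\<in>UNIV. (fpdim j)\<^sup>2) *\<^sub>R primary_mat"
proof -
  define a where "a k i = (\<Sum>j\<in>UNIV. fpdim j * N j i k)" for k i
  have "(\<Sum>m\<in>UNIV. a k m * a m i) = (\<Sum>j\<in>UNIV. (fpdim j)\<^sup>2) * a k i" for k i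
  proof -
    \<comment> \<open>M_j M_l = sum_m N_{jl}^m M_m by associativity, and sum_l N_{jl}^m FPdim_l = FPdim_j FPdim_m\<close>
    have "(\<Sum>m\<in>UNIV. a k m * a m i)
        = (\<Sum>m\<in>UNIV. \<Sum>j\<in>UNIV. \<Sum>l\<in>UNIV. (fpdim j * N j m k) * (fpdim l * N l i m))"
      unfolding a_def sum_product ..
    also have "\<dots> = (\<Sum>j\<in>UNIV. \<Sum>l\<in>UNIV. \<Sum>m\<in>UNIV. (fpdim j * N j m k) * (fpdim l * N l i m))"
      by (subst sum.swap) (rule sum.cong[OF refl], rule sum.swap)
    also have "\<dots> = (\<Sum>j\<in>UNIV. \<Sum>l\<in>UNIV. fpdim j * fpdim l * real (\<Sum>m\<in>UNIV. N l i m * N j m k))"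
      by (intro sum.cong refl) (simp add: sum_distrib_left mult_ac)
    also have "\<dots> = (\<Sum>j\<in>UNIV. \<Sum>l\<in>UNIV. fpdim j * fpdim l * real (\<Sum>m\<in>UNIV. N j l m * N m i k))"
      by (simp only: N_assoc)
    also have "\<dots> = (\<Sum>j\<in>UNIV. \<Sum>l\<in>UNIV. \<Sum>m\<in>UNIV.
        fpdim j * fpdim l * real (N j l m) * real (N m i k))"
      by (intro sum.cong refl) (simp add: sum_distrib_left mult_ac)
    also have "\<dots> = (\<Sum>j\<in>UNIV. \<Sum>m\<in>UNIV. \<Sum>l\<in>UNIV.
        fpdim j * fpdim l * real (N j l m) * real (N m i k))"
      by (rule sum.cong[OF refl], rule sum.swap)
    also have "\<dots> = (\<Sum>j\<in>UNIV. \<Sum>m\<in>UNIV. fpdim j * (\<Sum>l\<in>UNIV. N j l m * fpdim l) * N m i k)"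
      by (intro sum.cong refl) (simp add: sum_distrib_left sum_distrib_right mult_ac)
    also have "\<dots> = (\<Sum>j\<in>UNIV. \<Sum>m\<in>UNIV. fpdim j * (fpdim j * fpdim m) * N m i k)"
      by (simp only: fusion_mat_fpdim)
    also have "\<dots> = (\<Sum>j\<in>UNIV. (fpdim j)\<^sup>2 * a k i)"
      by (rule sum.cong[OF refl]) (simp add: a_def power2_eq_square sum_distrib_left mult_ac)
    also have "\<dots> = (\<Sum>j\<in>UNIV. (fpdim j)\<^sup>2) * a k i"
      by (simp add: sum_distrib_right)
    finally show ?thesis .
  qed
  then show ?thesis
    by (simp add: vec_eq_iff matrix_matrix_mult_def primary_mat_entry vector_scaleR_component
        scaleR_conv_of_real[where 'a=complex] a_def[symmetric] flip: of_real_mult of_real_sum)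
qed

lemma sum_fpdim_squares_pos: "(\<Sum>j\<in>UNIV. (fpdim j)\<^sup>2) > 0"
proof -
  have "(fpdim e)\<^sup>2 \<le> (\<Sum>j\<in>UNIV. (fpdim j)\<^sup>2)"
    by (rule member_le_sum) auto
  then show ?thesis
    by (simp add: fpdim_unit)
qed

end

theorem mainTheorem15:
  fixes N :: "'n::finite \<Rightarrow> 'n \<Rightarrow> 'n \<Rightarrow> nat" and e :: 'n and dual :: "'n \<Rightarrow> 'n"
  assumes "fusion_ring N e dual"
  shows "psd (\<Sum>j\<in>UNIV. mat_opnorm (fusion_mat N j) *\<^sub>R fusion_mat N j)"
proof -
  interpret fusion_rules N e dual
    by standard (rule assms)
  have "psd primary_mat"
    using primary_mat_hermitian primary_mat_square sum_fpdim_squares_pos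
    by (rule psd_if_hermitian_square_eq_scaleR)
  then show ?thesis
    unfolding primary_mat_def .
qed

end
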